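(* Let $F/\mathbb{Q}_p$ be a finite extension with ring of integers $\mathcal{O}_F$, ramification degree $e$, and residue field of cardinality $q$. Let $\nu_F$ be the right Haar measure on $\mathrm{SL}_2(F)$ normalized by $\nu_F(\mathrm{SL}_2(\mathcal{O}_F)) = 1$. For $a \in \mathbb{Z}_p \setminus \{0\}$ let \[S_F(a) = \left\{ \begin{pmatrix} \alpha_{11} & \alpha_{12} \\ \alpha_{21} & \alpha_{22} \end{pmatrix} \in \mathrm{SL}_2(F) : \begin{pmatrix} a\alpha_{11} & \alpha_{12} \\ a\alpha_{21} & \alpha_{22} \end{pmatrix} \in \mathrm{M}_2(\mathcal{O}_F) \right\}.\] Then $\nu_F(S_F(a)) = \dfrac{1 - q^{e v_p(a) + 1}}{1 - q}$, where $v_p$ is the normalized $p$-adic valuation. *)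

theory Defs
  imports "HOL-Analysis.Analysis"
begin

text \<open>A field F (of characteristic 0, via the type class) with a normalized discrete
  valuation v (v x is meaningful only for x \<noteq> 0; v 0 is irrelevant).\<close>

definition vge :: "('a::field \<Rightarrow> int) \<Rightarrow> int \<Rightarrow> 'a \<Rightarrow> bool" where
  "vge v n x \<longleftrightarrow> x = 0 \<or> n \<le> v x"

definition discrete_valuation :: "('a::field \<Rightarrow> int) \<Rightarrow> bool" where
  "discrete_valuation v \<longleftrightarrow>
     (\<forall>x y. x \<noteq> 0 \<longrightarrow> y \<noteq> 0 \<longrightarrow> v (x * y) = v x + v y) \<and>
     (\<forall>x y. x \<noteq> 0 \<longrightarrow> y \<noteq> 0 \<longrightarrow> x + y \<noteq> 0 \<longrightarrow> min (v x) (v y) \<le> v (x + y)) \<and>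
     (\<exists>\<pi>. \<pi> \<noteq> 0 \<and> v \<pi> = 1)"

definition val_complete :: "('a::field \<Rightarrow> int) \<Rightarrow> bool" where
  "val_complete v \<longleftrightarrow>
     (\<forall>X :: nat \<Rightarrow> 'a. (\<forall>n. \<exists>N. \<forall>m\<ge>N. \<forall>k\<ge>N. vge v n (X m - X k)) \<longrightarrow>
        (\<exists>L. \<forall>n. \<exists>N. \<forall>m\<ge>N. vge v n (X m - L)))"

definition int_ring :: "('a::field \<Rightarrow> int) \<Rightarrow> 'a set" where
  "int_ring v = {x. vge v 0 x}"

definition residue_field :: "('a::field \<Rightarrow> int) \<Rightarrow> 'a set set" where
  "residue_field v = int_ring v //
     {(x, y). x \<in> int_ring v \<and> y \<in> int_ring v \<and> vge v 1 (x - y)}"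

definition residue_card :: "('a::field \<Rightarrow> int) \<Rightarrow> nat" where
  "residue_card v = card (residue_field v)"

text \<open>(F, v) is a finite extension of Q_p: a complete discretely valued field of
  characteristic 0 with finite residue field of characteristic p.\<close>
definition padic_local_field :: "('a::field_char_0 \<Rightarrow> int) \<Rightarrow> nat \<Rightarrow> bool" where
  "padic_local_field v p \<longleftrightarrow> prime p \<and> discrete_valuation v \<and> val_complete v \<and>
     finite (residue_field v) \<and> vge v 1 (of_nat p)"

definition ram_index :: "('a::field_char_0 \<Rightarrow> int) \<Rightarrow> nat \<Rightarrow> nat" where
  "ram_index v p = nat (v (of_nat p))"

text \<open>Z_p inside F: the closure of the image of Z.\<close>
definition Zp_in :: "('a::field_char_0 \<Rightarrow> int) \<Rightarrow> nat \<Rightarrow> 'a set" where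
  "Zp_in v p = {x. \<forall>n. \<exists>m::int. vge v n (x - of_int m)}"

definition vp :: "('a::field_char_0 \<Rightarrow> int) \<Rightarrow> nat \<Rightarrow> 'a \<Rightarrow> nat" where
  "vp v p a = (GREATEST k::nat. a / of_nat p ^ k \<in> Zp_in v p)"

definition SL2 :: "('a::field ^ 2 ^ 2) set" where
  "SL2 = {A. det A = 1}"

definition SL2_int :: "('a::field \<Rightarrow> int) \<Rightarrow> ('a ^ 2 ^ 2) set" where
  "SL2_int v = {A \<in> SL2. \<forall>i j. vge v 0 (A $ i $ j)}"

definition mat_topology :: "('a::field \<Rightarrow> int) \<Rightarrow> ('a ^ 2 ^ 2) topology" where
  "mat_topology v = topology_generated_by
     {{B. \<forall>i j. vge v n (B $ i $ j - A $ i $ j)} | A n. True}"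

definition SL2_borel :: "('a::field \<Rightarrow> int) \<Rightarrow> ('a ^ 2 ^ 2) set set" where
  "SL2_borel v = sigma_sets SL2 {SL2 \<inter> U | U. openin (mat_topology v) U}"

definition normalized_right_haar :: "('a::field \<Rightarrow> int) \<Rightarrow> ('a ^ 2 ^ 2) measure \<Rightarrow> bool" where
  "normalized_right_haar v M \<longleftrightarrow>
     space M = SL2 \<and> sets M = SL2_borel v \<and>
     (\<forall>A\<in>sets M. \<forall>g\<in>SL2. emeasure M ((\<lambda>x. x ** g) ` A) = emeasure M A) \<and>
     (\<forall>C. compactin (subtopology (mat_topology v) SL2) C \<longrightarrow> emeasure M C < \<infinity>) \<and>
     emeasure M (SL2_int v) = 1"

definition S_F :: "('a::field \<Rightarrow> int) \<Rightarrow> 'a \<Rightarrow> ('a ^ 2 ^ 2) set" where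
  "S_F v a = {A \<in> SL2. vge v 0 (a * A $ 1 $ 1) \<and> vge v 0 (A $ 1 $ 2) \<and>
                        vge v 0 (a * A $ 2 $ 1) \<and> vge v 0 (A $ 2 $ 2)}"

end

theory Submission
  imports Defs
begin

(* Let K = SL_2(O_F), let pi be a uniformizer and m = v_F(a) = e v_p(a). Since S_F(a) consists
   of the A in SL_2(F) with A diag(a,1) integral, it is stable under left multiplication by K.
   Clearing the first column by row operations over O_F puts every element of S_F(a) into
   the form k g with k in K and

     g = [[pi^i/a, x], [0, a/pi^i]],   0 <= i <= m,

   where x only matters modulo pi^(m-i) and can therefore be taken among the q^(m-i)
   pi-adic digit expansions of length m-i; distinct such g give disjoint cosets K g.
   By right invariance every coset has measure nu(K) = 1, hence
   nu(S_F(a)) = sum_{i<=m} q^(m-i) = (1 - q^(m+1)) / (1 - q). *)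

section \<open>Discrete valuations\<close>

locale valued_field =
  fixes v :: "'a::field \<Rightarrow> int"
  assumes discrete_valuation: "discrete_valuation v"
begin

lemma valuation_mult: "x \<noteq> 0 \<Longrightarrow> y \<noteq> 0 \<Longrightarrow> v (x * y) = v x + v y"
  using discrete_valuation unfolding discrete_valuation_def by blast

lemma valuation_add: "x \<noteq> 0 \<Longrightarrow> y \<noteq> 0 \<Longrightarrow> x + y \<noteq> 0 \<Longrightarrow> min (v x) (v y) \<le> v (x + y)"
  using discrete_valuation unfolding discrete_valuation_def by blast

lemma valuation_one [simp]: "v 1 = 0"
  using valuation_mult[of 1 1] by simp

lemma valuation_inverse: "x \<noteq> 0 \<Longrightarrow> v (inverse x) = - v x"
  using valuation_mult[of x "inverse x"] by simp

lemma valuation_divide: "x \<noteq> 0 \<Longrightarrow> y \<noteq> 0 \<Longrightarrow> v (x / y) = v x - v y"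
  by (simp add: divide_inverse valuation_mult valuation_inverse)

lemma valuation_minus [simp]: "v (- x) = v x"
proof (cases "x = 0")
  case False
  have "v (-1) = 0"
    using valuation_mult[of "-1" "-1"] by simp
  with False show ?thesis
    using valuation_mult[of "-1" x] by simp
qed simp

lemma valuation_power: "x \<noteq> 0 \<Longrightarrow> v (x ^ n) = int n * v x"
  by (induction n) (auto simp: valuation_mult algebra_simps)

lemma vge_zero [simp]: "vge v n 0"
  by (simp add: vge_def)

lemma vge_nonzero_iff [simp]: "x \<noteq> 0 \<Longrightarrow> vge v n x \<longleftrightarrow> n \<le> v x"
  by (simp add: vge_def)

lemma vge_one: "vge v 0 1"
  by simp

lemma vge_minus [simp]: "vge v n (- x) \<longleftrightarrow> vge v n x"
  by (simp add: vge_def)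

lemma vge_mono: "vge v n x \<Longrightarrow> m \<le> n \<Longrightarrow> vge v m x"
  by (auto simp: vge_def)

lemma vge_add: "vge v n x \<Longrightarrow> vge v n y \<Longrightarrow> vge v n (x + y)"
  unfolding vge_def using valuation_add[of x y] by fastforce

lemma vge_diff: "vge v n x \<Longrightarrow> vge v n y \<Longrightarrow> vge v n (x - y)"
  using vge_add[of n x "- y"] by simp

lemma vge_mult: "vge v i x \<Longrightarrow> vge v j y \<Longrightarrow> n \<le> i + j \<Longrightarrow> vge v n (x * y)"
  by (cases "x = 0 \<or> y = 0") (auto simp: valuation_mult)

lemma vge_zero_mult: "vge v 0 x \<Longrightarrow> vge v 0 y \<Longrightarrow> vge v 0 (x * y)"
  using vge_mult[of 0 x 0 y 0] by simp

lemma vge_mult_nonzero: "c \<noteq> 0 \<Longrightarrow> vge v n (c * y) \<longleftrightarrow> vge v (n - v c) y"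
  by (cases "y = 0") (auto simp: valuation_mult)

lemma vge_of_int: "vge v 0 (of_int m)"
proof (induction m rule: int_induct[where k = 0])
  case (step1 i)
  then show ?case using vge_add[OF _ vge_one] by simp
next
  case (step2 i)
  then show ?case using vge_diff[OF _ vge_one] by simp
qed simp

lemma valuation_eq_if_vge_diff:
  assumes "x \<noteq> 0" and "vge v (v x + 1) (y - x)"
  shows "y \<noteq> 0" and "v y = v x"
proof -
  have "y \<noteq> 0 \<and> v y = v x"
  proof (cases "y = x")
    case False
    then have d: "y - x \<noteq> 0" "v (y - x) \<ge> v x + 1"
      using assms(2) by auto
    then have y: "y \<noteq> 0"
      by auto
    have "min (v x) (v (y - x)) \<le> v y"
      using valuation_add[of x "y - x"] assms(1) d y by simp
    moreover have "min (v y) (v (x - y)) \<le> v x"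
      using valuation_add[of y "x - y"] assms(1) d y by simp
    moreover have "v (x - y) = v (y - x)"
      using valuation_minus[of "y - x"] by simp
    ultimately show ?thesis
      using d y by auto
  qed (use assms(1) in simp)
  then show "y \<noteq> 0" and "v y = v x"
    by auto
qed

end


section \<open>Residue representatives and digit expansions\<close>

definition residue_rel :: "('a::field \<Rightarrow> int) \<Rightarrow> ('a \<times> 'a) set" where
  "residue_rel v = {(x, y). x \<in> int_ring v \<and> y \<in> int_ring v \<and> vge v 1 (x - y)}"

lemma residue_field_eq_quotient: "residue_field v = int_ring v // residue_rel v"
  by (simp add: residue_field_def residue_rel_def)

context valued_field
begin

lemma equiv_residue_rel: "equiv (int_ring v) (residue_rel v)"
proof (rule equivI)
  show "residue_rel v \<subseteq> int_ring v \<times> int_ring v"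
    by (auto simp: residue_rel_def)
  show "refl_on (int_ring v) (residue_rel v)"
    by (auto simp: refl_on_def residue_rel_def)
  show "sym (residue_rel v)"
    by (rule symI) (use vge_minus[of 1 "_ - _"] in \<open>auto simp: residue_rel_def\<close>)
  show "trans (residue_rel v)"
    by (rule transI) (use vge_add[of 1 "_ - _" "_ - _"] in \<open>fastforce simp: residue_rel_def\<close>)
qed

lemma residue_representatives_exist:
  assumes "finite (residue_field v)"
  obtains R where "R \<subseteq> int_ring v" and "\<And>x. x \<in> int_ring v \<Longrightarrow> \<exists>r\<in>R. vge v 1 (x - r)"
    and "\<And>r r'. r \<in> R \<Longrightarrow> r' \<in> R \<Longrightarrow> vge v 1 (r - r') \<Longrightarrow> r = r'"
    and "finite R" and "card R = residue_card v"
proof -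
  have "\<forall>C\<in>residue_field v. \<exists>x. x \<in> C"
    by (auto simp: residue_field_eq_quotient residue_rel_def elim!: quotientE)
  then obtain rep where rep: "\<And>C. C \<in> residue_field v \<Longrightarrow> rep C \<in> C"
    by metis
  have same_class: "C = C'"
    if "C \<in> residue_field v" "C' \<in> residue_field v" "(rep C, rep C') \<in> residue_rel v" for C C'
    using quotient_eqI[OF equiv_residue_rel _ _ rep rep] that
    by (simp add: residue_field_eq_quotient)
  have class_of: "x \<in> int_ring v \<Longrightarrow> residue_rel v `` {x} \<in> residue_field v
      \<and> (x, rep (residue_rel v `` {x})) \<in> residue_rel v" for x
    using rep[of "residue_rel v `` {x}"] by (simp add: residue_field_eq_quotient quotientI)
  have in_ring: "rep C \<in> int_ring v" if "C \<in> residue_field v" for C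
    using rep[OF that] that in_quotient_imp_subset[OF equiv_residue_rel]
    by (auto simp: residue_field_eq_quotient)
  have "inj_on rep (residue_field v)"
    by (rule inj_onI) (use same_class equiv_residue_rel in \<open>auto simp: residue_rel_def in_ring\<close>)
  show thesis
  proof (rule that[of "rep ` residue_field v"])
    show "rep ` residue_field v \<subseteq> int_ring v"
      using in_ring by blast
    show "\<exists>r\<in>rep ` residue_field v. vge v 1 (x - r)" if "x \<in> int_ring v" for x
      using class_of[OF that] by (auto simp: residue_rel_def)
    show "r = r'" if "r \<in> rep ` residue_field v" "r' \<in> rep ` residue_field v" "vge v 1 (r - r')"
      for r r'
      using that same_class in_ring by (force simp: residue_rel_def)
    show "finite (rep ` residue_field v)"
      using assms by simp
    show "card (rep ` residue_field v) = residue_card v"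
      using card_image[OF \<open>inj_on rep (residue_field v)\<close>] by (simp add: residue_card_def)
  qed
qed

end


fun digit_expansions :: "'a::field \<Rightarrow> 'a set \<Rightarrow> nat \<Rightarrow> 'a set" where
  "digit_expansions \<pi> R 0 = {0}"
| "digit_expansions \<pi> R (Suc k) = (\<lambda>(t, r). t + \<pi> ^ k * r) ` (digit_expansions \<pi> R k \<times> R)"

locale residue_system = valued_field +
  fixes \<pi> :: "'a::field" and R :: "'a set"
  assumes uniformizer_nonzero [simp]: "\<pi> \<noteq> 0" and valuation_uniformizer: "v \<pi> = 1"
    and digits_integral: "R \<subseteq> int_ring v"
    and digits_cover: "x \<in> int_ring v \<Longrightarrow> \<exists>r\<in>R. vge v 1 (x - r)"
    and digits_distinct: "r \<in> R \<Longrightarrow> r' \<in> R \<Longrightarrow> vge v 1 (r - r') \<Longrightarrow> r = r'"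
    and finite_digits: "finite R"
begin

lemma valuation_uniformizer_power [simp]: "v (\<pi> ^ k) = int k"
  by (simp add: valuation_power valuation_uniformizer)

lemma vge_uniformizer_power_mult: "vge v n (\<pi> ^ k * y) \<longleftrightarrow> vge v (n - int k) y"
  by (simp add: vge_mult_nonzero)

lemma vge_digit_diff: "r \<in> R \<Longrightarrow> r' \<in> R \<Longrightarrow> vge v 0 (r - r')"
  using digits_integral by (auto simp: int_ring_def intro: vge_diff)

lemma digit_expansions_integral: "digit_expansions \<pi> R k \<subseteq> int_ring v"
proof (induction k)
  case (Suc k)
  have "vge v 0 (t + \<pi> ^ k * r)" if "t \<in> digit_expansions \<pi> R k" "r \<in> R" for t r
  proof (rule vge_add)
    show "vge v 0 t"
      using that Suc by (auto simp: int_ring_def)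
    show "vge v 0 (\<pi> ^ k * r)"
      using that digits_integral by (auto simp: vge_uniformizer_power_mult int_ring_def intro: vge_mono)
  qed
  then show ?case
    by (auto simp: int_ring_def)
qed (simp add: int_ring_def)

lemma digit_expansions_approx:
  "x \<in> int_ring v \<Longrightarrow> \<exists>t\<in>digit_expansions \<pi> R k. vge v (int k) (x - t)"
proof (induction k)
  case (Suc k)
  then obtain t where t: "t \<in> digit_expansions \<pi> R k" "vge v (int k) (x - t)"
    by blast
  define y where "y = (x - t) / \<pi> ^ k"
  have xt: "x - t = \<pi> ^ k * y"
    by (simp add: y_def)
  then have "vge v 0 y"
    using t(2) by (simp add: vge_uniformizer_power_mult)
  then obtain r where r: "r \<in> R" "vge v 1 (y - r)"
    using digits_cover by (auto simp: int_ring_def)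
  have "x - (t + \<pi> ^ k * r) = \<pi> ^ k * (y - r)"
    using xt by (simp add: algebra_simps)
  then have "vge v (int (Suc k)) (x - (t + \<pi> ^ k * r))"
    using r(2) by (simp add: vge_uniformizer_power_mult)
  moreover have "t + \<pi> ^ k * r \<in> digit_expansions \<pi> R (Suc k)"
    using t r by force
  ultimately show ?case
    by blast
qed (simp add: int_ring_def)

lemma digit_expansions_unique:
  "t \<in> digit_expansions \<pi> R k \<Longrightarrow> t' \<in> digit_expansions \<pi> R k \<Longrightarrow> vge v (int k) (t - t') \<Longrightarrow> t = t'"
proof (induction k arbitrary: t t')
  case (Suc k)
  obtain s r where s: "t = s + \<pi> ^ k * r" "s \<in> digit_expansions \<pi> R k" "r \<in> R"
    using Suc.prems by auto
  obtain s' r' where s': "t' = s' + \<pi> ^ k * r'" "s' \<in> digit_expansions \<pi> R k" "r' \<in> R"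
    using Suc.prems by auto
  have diff: "t - t' = (s - s') + \<pi> ^ k * (r - r')"
    using s s' by (simp add: algebra_simps)
  have "vge v (int k) (\<pi> ^ k * (r - r'))"
    using vge_digit_diff[OF s(3) s'(3)] by (simp add: vge_uniformizer_power_mult)
  moreover have "vge v (int k) (t - t')"
    using Suc.prems(3) vge_mono by simp
  ultimately have "vge v (int k) (s - s')"
    using vge_diff diff by fastforce
  then have "s = s'"
    using Suc.IH s s' by blast
  then have "vge v 1 (r - r')"
    using diff Suc.prems(3) by (simp add: vge_uniformizer_power_mult)
  then show ?case
    using digits_distinct s s' \<open>s = s'\<close> by blast
qed simp

lemma card_digit_expansions: "finite (digit_expansions \<pi> R k) \<and> card (digit_expansions \<pi> R k) = card R ^ k"
proof (induction k)
  case (Suc k)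
  have "inj_on (\<lambda>(t, r). t + \<pi> ^ k * r) (digit_expansions \<pi> R k \<times> R)"
  proof (rule inj_onI, clarify)
    fix s r s' r'
    assume s: "s \<in> digit_expansions \<pi> R k" "r \<in> R" "s' \<in> digit_expansions \<pi> R k" "r' \<in> R"
      and eq: "s + \<pi> ^ k * r = s' + \<pi> ^ k * r'"
    have "s - s' = \<pi> ^ k * (r' - r)"
      using eq by (simp add: algebra_simps)
    moreover have "vge v (int k) (\<pi> ^ k * (r' - r))"
      using vge_digit_diff[of r' r] s by (simp add: vge_uniformizer_power_mult)
    ultimately have "s = s'"
      using digit_expansions_unique s by simp
    then show "s = s' \<and> r = r'"
      using eq by simp
  qed
  then show ?case
    using Suc finite_digits by (simp add: card_image card_cartesian_product)
qed simp

lemma two_le_card_digits: "2 \<le> card R"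
proof -
  obtain r0 where r0: "r0 \<in> R" "vge v 1 (0 - r0)"
    using digits_cover[of 0] by (auto simp: int_ring_def)
  obtain r1 where r1: "r1 \<in> R" "vge v 1 (1 - r1)"
    using digits_cover[of 1] by (auto simp: int_ring_def)
  have "r0 \<noteq> r1"
  proof
    assume "r0 = r1"
    then have "vge v 1 ((1 - r1) - (0 - r0))"
      using vge_diff[OF r1(2) r0(2)] by simp
    then show False
      using \<open>r0 = r1\<close> by simp
  qed
  then have "card {r0, r1} \<le> card R"
    using r0 r1 finite_digits by (intro card_mono) auto
  then show ?thesis
    using \<open>r0 \<noteq> r1\<close> by simp
qed

end


section \<open>Valuations of elements of Z_p\<close>

context
  fixes v :: "'a::field_char_0 \<Rightarrow> int" and p :: nat
  assumes padic: "padic_local_field v p"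
begin

interpretation valued_field v
  using padic by unfold_locales (simp add: padic_local_field_def)

lemma prime_residue_char: "prime p"
  using padic by (simp add: padic_local_field_def)

lemma residue_char_nonzero [simp]: "p \<noteq> 0"
  using prime_residue_char by auto

lemma valuation_residue_char_pos: "1 \<le> v (of_nat p)"
  using padic by (simp add: padic_local_field_def)

lemma valuation_of_int_coprime:
  assumes "\<not> int p dvd m"
  shows "v (of_int m) = 0"
proof (rule ccontr)
  assume "v (of_int m) \<noteq> 0"
  moreover have "m \<noteq> 0"
    using assms by auto
  ultimately have m: "vge v 1 (of_int m :: 'a)"
    using vge_of_int[of m] by simp
  have "coprime (int p) m"
    using assms prime_residue_char by (simp add: prime_imp_coprime)
  then obtain s t where st: "s * int p + t * m = 1"
    using bezout_int[of "int p" m] by auto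
  have "vge v 1 (of_int s * of_nat p + of_int t * of_int m :: 'a)"
  proof (rule vge_add)
    show "vge v 1 (of_int s * of_nat p :: 'a)"
      using vge_mult[OF vge_of_int[of s], of 1 "of_nat p" 1] padic
      by (simp add: padic_local_field_def)
    show "vge v 1 (of_int t * of_int m :: 'a)"
      using vge_mult[OF vge_of_int[of t] m] by simp
  qed
  then show False
    using arg_cong[OF st, of "of_int :: int \<Rightarrow> 'a"] by simp
qed

lemma valuation_of_int:
  assumes "m \<noteq> 0"
  shows "v (of_int m) = int (multiplicity (int p) m) * v (of_nat p)"
proof -
  have "\<not> is_unit (int p)"
    using prime_residue_char not_prime_unit by fastforce
  then obtain y where y: "m = int p ^ multiplicity (int p) m * y" "\<not> int p dvd y"
    using multiplicity_decompose'[OF assms] by blast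
  then have "(of_int m :: 'a) = of_nat p ^ multiplicity (int p) m * of_int y" "y \<noteq> 0"
    by (metis of_int_mult of_int_of_nat_eq of_int_power, use y in auto)
  then show ?thesis
    using valuation_of_int_coprime[OF y(2)] by (simp add: valuation_mult valuation_power)
qed

lemma Zp_in_integral:
  assumes "x \<in> Zp_in v p"
  shows "vge v 0 x"
proof -
  obtain m :: int where "vge v 0 (x - of_int m)"
    using assms unfolding Zp_in_def by blast
  from vge_add[OF this vge_of_int[of m]] show ?thesis
    by simp
qed

lemma Zp_in_approx:
  assumes "a \<in> Zp_in v p" and "a \<noteq> 0"
  obtains m :: int where "m \<noteq> 0" and "v (of_int m) = v a" and "vge v n (a - of_int m)"
proof -
  obtain m :: int where m: "vge v (max n (v a + 1)) (a - of_int m)"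
    using assms(1) unfolding Zp_in_def by blast
  then have "vge v (v a + 1) (of_int m - a)"
    by (metis vge_mono max.cobounded2 minus_diff_eq vge_minus)
  then have "(of_int m :: 'a) \<noteq> 0" "v (of_int m) = v a"
    using valuation_eq_if_vge_diff[OF assms(2)] by blast+
  moreover have "vge v n (a - of_int m)"
    using m vge_mono by fastforce
  ultimately show thesis
    using that by simp
qed

lemma Zp_in_valuation:
  assumes "a \<in> Zp_in v p" and "a \<noteq> 0"
  obtains j where "v a = int j * v (of_nat p)"
  using Zp_in_approx[OF assms, of 0] valuation_of_int by metis

lemma Zp_in_divide_prime_power:
  assumes "a \<in> Zp_in v p" and "a \<noteq> 0" and j: "v a = int j * v (of_nat p)"
  shows "a / of_nat p ^ j \<in> Zp_in v p"
  unfolding Zp_in_def mem_Collect_eq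
proof
  fix n
  obtain m :: int where m: "m \<noteq> 0" "v (of_int m) = v a" "vge v (n + v a) (a - of_int m)"
    using Zp_in_approx[OF assms(1,2)] .
  have "multiplicity (int p) m = j"
    using m(2) valuation_of_int[OF m(1)] j valuation_residue_char_pos by simp
  then obtain m' where "m = int p ^ j * m'"
    using multiplicity_dvd[of "int p" m] by (auto elim: dvdE)
  then have "a - of_int m = of_nat p ^ j * (a / of_nat p ^ j - of_int m')"
    by (simp add: algebra_simps)
  then have "vge v n (a / of_nat p ^ j - of_int m')"
    using m(3) by (simp add: vge_mult_nonzero valuation_power j)
  then show "\<exists>m::int. vge v n (a / of_nat p ^ j - of_int m)" ..
qed

lemma vp_times_ram_index:
  assumes "a \<in> Zp_in v p" and "a \<noteq> 0"
  shows "int (ram_index v p * vp v p a) = v a"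
proof -
  obtain j where j: "v a = int j * v (of_nat p)"
    using Zp_in_valuation[OF assms] .
  have "k \<le> j" if "a / of_nat p ^ k \<in> Zp_in v p" for k
  proof -
    have "0 \<le> v (a / of_nat p ^ k)"
      using Zp_in_integral[OF that] assms(2) by simp
    then have "int k * v (of_nat p) \<le> int j * v (of_nat p)"
      using assms(2) j by (simp add: valuation_divide valuation_power)
    then show "k \<le> j"
      using valuation_residue_char_pos by simp
  qed
  then have "vp v p a = j"
    unfolding vp_def using Zp_in_divide_prime_power[OF assms j] by (blast intro: Greatest_equality)
  then show ?thesis
    using j valuation_residue_char_pos by (simp add: ram_index_def)
qed

end


section \<open>Matrices over the valuation ring\<close>

definition mat2 :: "'a \<Rightarrow> 'a \<Rightarrow> 'a \<Rightarrow> 'a \<Rightarrow> 'a ^ 2 ^ 2" where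
  "mat2 a b c d = (\<chi> i j. if i = 1 then (if j = 1 then a else b) else (if j = 1 then c else d))"

lemma mat2_nth [simp]:
  "mat2 a b c d $ 1 $ 1 = a" "mat2 a b c d $ 1 $ 2 = b"
  "mat2 a b c d $ 2 $ 1 = c" "mat2 a b c d $ 2 $ 2 = d"
  by (simp_all add: mat2_def)

lemma mat2_eta: "A = mat2 (A $ 1 $ 1) (A $ 1 $ 2) (A $ 2 $ 1) (A $ 2 $ 2)"
  by (simp add: vec_eq_iff forall_2)

lemma mat2_cases: obtains a b c d where "A = mat2 a b c d"
  using mat2_eta by blast

lemma matrix_mult_2_nth:
  "((B :: 'a::semiring_1 ^ 2 ^ 2) ** A) $ i $ j = B $ i $ 1 * A $ 1 $ j + B $ i $ 2 * A $ 2 $ j"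
  by (simp add: matrix_matrix_mult_def sum_2)

lemma mat2_mult:
  "mat2 a b c d ** mat2 a' b' c' d' =
     mat2 (a * a' + b * c') (a * b' + b * d') (c * a' + d * c') (c * b' + d * d')"
  by (simp add: vec_eq_iff forall_2 matrix_mult_2_nth)

lemma det_mat2: "det (mat2 a b c d) = a * d - b * c"
  by (simp add: det_2)

lemma mat_one_eq_mat2: "mat 1 = mat2 1 0 0 (1 :: 'a::zero_neq_one)"
  by (simp add: vec_eq_iff forall_2 mat_def)

definition adjugate2 :: "'a::comm_ring_1 ^ 2 ^ 2 \<Rightarrow> 'a ^ 2 ^ 2" where
  "adjugate2 A = mat2 (A $ 2 $ 2) (- A $ 1 $ 2) (- A $ 2 $ 1) (A $ 1 $ 1)"

lemma adjugate2_mat2 [simp]: "adjugate2 (mat2 a b c d) = mat2 d (- b) (- c) a"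
  by (simp add: adjugate2_def)

lemma adjugate2_mult: "det A = 1 \<Longrightarrow> adjugate2 A ** A = mat 1"
  by (cases A rule: mat2_cases) (simp add: mat2_mult mat_one_eq_mat2 det_mat2 algebra_simps)

lemma mult_adjugate2: "det A = 1 \<Longrightarrow> A ** adjugate2 A = mat 1"
  by (cases A rule: mat2_cases) (simp add: mat2_mult mat_one_eq_mat2 det_mat2 algebra_simps)

definition integral_matrix :: "('a::field \<Rightarrow> int) \<Rightarrow> 'a ^ 2 ^ 2 \<Rightarrow> bool" where
  "integral_matrix v A \<longleftrightarrow> (\<forall>i j. vge v 0 (A $ i $ j))"

lemma SL2_int_iff: "A \<in> SL2_int v \<longleftrightarrow> det A = 1 \<and> integral_matrix v A"
  by (simp add: SL2_int_def SL2_def integral_matrix_def)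

lemma S_F_iff: "A \<in> S_F v a \<longleftrightarrow> det A = 1 \<and> integral_matrix v (A ** mat2 a 0 0 1)"
  by (simp add: S_F_def SL2_def integral_matrix_def forall_2 matrix_mult_2_nth mult.commute)

lemma integral_mat2_iff:
  "integral_matrix v (mat2 a b c d) \<longleftrightarrow> vge v 0 a \<and> vge v 0 b \<and> vge v 0 c \<and> vge v 0 d"
  by (simp add: integral_matrix_def forall_2)

definition SL2_int_coset :: "('a::field \<Rightarrow> int) \<Rightarrow> 'a ^ 2 ^ 2 \<Rightarrow> ('a ^ 2 ^ 2) set" where
  "SL2_int_coset v g = (\<lambda>k. k ** g) ` SL2_int v"

context valued_field
begin

lemma integral_matrix_mult:
  "integral_matrix v A \<Longrightarrow> integral_matrix v B \<Longrightarrow> integral_matrix v (A ** B)"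
  unfolding integral_matrix_def matrix_mult_2_nth by (blast intro: vge_add vge_zero_mult)

lemma SL2_int_mult: "k \<in> SL2_int v \<Longrightarrow> k' \<in> SL2_int v \<Longrightarrow> k ** k' \<in> SL2_int v"
  by (simp add: SL2_int_iff det_mul integral_matrix_mult)

lemma SL2_int_adjugate2: "k \<in> SL2_int v \<Longrightarrow> adjugate2 k \<in> SL2_int v"
  by (cases k rule: mat2_cases) (simp add: SL2_int_iff integral_mat2_iff det_mat2 algebra_simps)

lemma S_F_left_mult: "k \<in> SL2_int v \<Longrightarrow> A \<in> S_F v a \<Longrightarrow> k ** A \<in> S_F v a"
  by (simp add: S_F_iff SL2_int_iff det_mul integral_matrix_mult flip: matrix_mul_assoc)

lemma SL2_int_coset_memI:
  assumes "k \<in> SL2_int v" and "k ** A = g"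
  shows "A \<in> SL2_int_coset v g"
proof -
  have "A = adjugate2 k ** g"
    using assms adjugate2_mult[of k] by (simp add: SL2_int_iff matrix_mul_assoc flip: assms(2))
  then show ?thesis
    using SL2_int_adjugate2[OF assms(1)] by (auto simp: SL2_int_coset_def)
qed

lemma SL2_int_coset_meet:
  assumes "det g = 1" and "y \<in> SL2_int_coset v g" and "y \<in> SL2_int_coset v g'"
  shows "g' ** adjugate2 g \<in> SL2_int v"
proof -
  obtain k k' where k: "k \<in> SL2_int v" "k' \<in> SL2_int v" and eq: "k ** g = k' ** g'"
    using assms(2,3) by (auto simp: SL2_int_coset_def)
  have "g' ** adjugate2 g = adjugate2 k' ** (k' ** g') ** adjugate2 g"
    using adjugate2_mult[of k'] k(2) by (simp add: SL2_int_iff matrix_mul_assoc)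
  also have "\<dots> = adjugate2 k' ** k"
    using mult_adjugate2[OF assms(1)] by (metis eq matrix_mul_assoc matrix_mul_rid)
  finally show ?thesis
    using k by (simp add: SL2_int_mult SL2_int_adjugate2)
qed

end

lemma emeasure_SL2_int_coset:
  assumes "normalized_right_haar v M" and "det g = 1"
  shows "SL2_int_coset v g \<in> sets M" and "emeasure M (SL2_int_coset v g) = 1"
proof -
  have "emeasure M (SL2_int v) = 1"
    using assms(1) by (simp add: normalized_right_haar_def)
  then have "SL2_int v \<in> sets M"
    using emeasure_notin_sets by fastforce
  then show "emeasure M (SL2_int_coset v g) = 1"
    using assms \<open>emeasure M (SL2_int v) = 1\<close>
    by (simp add: normalized_right_haar_def SL2_int_coset_def SL2_def)
  then show "SL2_int_coset v g \<in> sets M"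
    using emeasure_notin_sets by fastforce
qed

lemma emeasure_disjoint_Union_SL2_int_cosets:
  assumes "normalized_right_haar v M" and "finite I" and "\<And>i. i \<in> I \<Longrightarrow> det (g i) = 1"
    and "disjoint_family_on (\<lambda>i. SL2_int_coset v (g i)) I"
  shows "emeasure M (\<Union>i\<in>I. SL2_int_coset v (g i)) = of_nat (card I)"
proof -
  have "emeasure M (\<Union>i\<in>I. SL2_int_coset v (g i)) = (\<Sum>i\<in>I. emeasure M (SL2_int_coset v (g i)))"
    using assms emeasure_SL2_int_coset(1)[OF assms(1)] by (intro sum_emeasure[symmetric]) auto
  also have "\<dots> = of_nat (card I)"
    using emeasure_SL2_int_coset(2)[OF assms(1) assms(3)] by simp
  finally show ?thesis .
qed


context residue_system
begin

lemma vge_divide_uniformizer_power: "vge v 0 (x / \<pi> ^ k) \<longleftrightarrow> vge v (int k) x"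
  by (cases "x = 0") (simp_all add: valuation_divide)

lemma clear_first_column:
  assumes "vge v 0 b" and "vge v 0 c" and "b \<noteq> 0 \<or> c \<noteq> 0"
  shows "\<exists>k\<in>SL2_int v. \<exists>i. k $ 1 $ 1 * b + k $ 1 $ 2 * c = \<pi> ^ i \<and> k $ 2 $ 1 * b + k $ 2 $ 2 * c = 0"
proof (cases "b \<noteq> 0 \<and> vge v (v b) c")
  case True
  define i where "i = nat (v b)"
  have i: "v b = int i"
    using assms(1) True by (simp add: i_def)
  have "mat2 (\<pi> ^ i / b) 0 (- c / \<pi> ^ i) (b / \<pi> ^ i) \<in> SL2_int v"
    using True i by (simp add: SL2_int_iff det_mat2 integral_mat2_iff valuation_divide
        vge_divide_uniformizer_power)
  moreover have "(\<pi> ^ i / b) * b = \<pi> ^ i" "- c / \<pi> ^ i * b + b / \<pi> ^ i * c = 0"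
    using True by (simp_all add: field_simps)
  ultimately show ?thesis
    by (metis mat2_nth mult_zero_left add_0_right)
next
  case False
  then have "c \<noteq> 0" and "vge v (v c) b"
    using assms by (auto simp: vge_def)
  define i where "i = nat (v c)"
  have i: "v c = int i"
    using assms(2) \<open>c \<noteq> 0\<close> by (simp add: i_def)
  have "mat2 0 (\<pi> ^ i / c) (- c / \<pi> ^ i) (b / \<pi> ^ i) \<in> SL2_int v"
    using \<open>c \<noteq> 0\<close> \<open>vge v (v c) b\<close> i
    by (simp add: SL2_int_iff det_mat2 integral_mat2_iff valuation_divide vge_divide_uniformizer_power)
  moreover have "(\<pi> ^ i / c) * c = \<pi> ^ i" "- c / \<pi> ^ i * b + b / \<pi> ^ i * c = 0"
    using \<open>c \<noteq> 0\<close> by (simp_all add: field_simps)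
  ultimately show ?thesis
    by (metis mat2_nth mult_zero_left add_0_left)
qed

end

section \<open>Coset decomposition of S_F(a)\<close>

locale coset_decomposition = residue_system +
  fixes a :: "'a::field" and m :: nat
  assumes a_nonzero [simp]: "a \<noteq> 0" and valuation_a: "v a = int m"
begin

definition coset_rep :: "nat \<Rightarrow> 'a \<Rightarrow> 'a ^ 2 ^ 2" where
  "coset_rep i x = mat2 (\<pi> ^ i / a) x 0 (a / \<pi> ^ i)"

definition coset_index :: "(nat \<times> 'a) set" where
  "coset_index = (SIGMA i:{..m}. digit_expansions \<pi> R (m - i))"

lemma det_coset_rep: "det (coset_rep i x) = 1"
  by (simp add: coset_rep_def det_mat2)

lemma upper_triangular_in_S_F_iff:
  "mat2 (\<pi> ^ i / a) x 0 d \<in> S_F v a \<longleftrightarrow> d = a / \<pi> ^ i \<and> i \<le> m \<and> vge v 0 x"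
proof -
  have "det (mat2 (\<pi> ^ i / a) x 0 d) = 1 \<longleftrightarrow> d = a / \<pi> ^ i"
    by (auto simp: det_mat2 field_simps)
  moreover have "vge v 0 (a / \<pi> ^ i) \<longleftrightarrow> i \<le> m"
    by (simp add: vge_divide_uniformizer_power valuation_a)
  ultimately show ?thesis
    by (auto simp: S_F_iff mat2_mult integral_mat2_iff vge_divide_uniformizer_power)
qed

lemma SL2_int_coset_subset_S_F:
  assumes "(i, x) \<in> coset_index"
  shows "SL2_int_coset v (coset_rep i x) \<subseteq> S_F v a"
proof -
  have "coset_rep i x \<in> S_F v a"
    using assms digit_expansions_integral
    by (auto simp: coset_rep_def coset_index_def upper_triangular_in_S_F_iff int_ring_def)
  then show ?thesis
    by (auto simp: SL2_int_coset_def S_F_left_mult)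
qed

lemma S_F_triangularize:
  assumes "A \<in> S_F v a"
  obtains k i x where "k \<in> SL2_int v" and "i \<le> m" and "vge v 0 x"
    and "k ** A = mat2 (\<pi> ^ i / a) x 0 (a / \<pi> ^ i)"
proof -
  have column: "vge v 0 (a * A $ 1 $ 1)" "vge v 0 (a * A $ 2 $ 1)"
    "a * A $ 1 $ 1 \<noteq> 0 \<or> a * A $ 2 $ 1 \<noteq> 0"
    using assms by (auto simp: S_F_def SL2_def det_2)
  then obtain k i where k: "k \<in> SL2_int v"
    and i: "k $ 1 $ 1 * (a * A $ 1 $ 1) + k $ 1 $ 2 * (a * A $ 2 $ 1) = \<pi> ^ i"
      "k $ 2 $ 1 * (a * A $ 1 $ 1) + k $ 2 $ 2 * (a * A $ 2 $ 1) = 0"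
    using clear_first_column by blast
  have "(k ** A) $ 1 $ 1 = \<pi> ^ i / a"
    using i(1) by (simp add: matrix_mult_2_nth field_simps)
  moreover have "a * (k ** A) $ 2 $ 1 = 0"
    using i(2) by (simp add: matrix_mult_2_nth algebra_simps)
  ultimately
  have kA: "k ** A = mat2 (\<pi> ^ i / a) ((k ** A) $ 1 $ 2) 0 ((k ** A) $ 2 $ 2)"
    by (metis mat2_eta a_nonzero mult_eq_0_iff)
  have "k ** A \<in> S_F v a"
    using S_F_left_mult[OF k assms] .
  then show thesis
    using that[OF k] kA by (metis upper_triangular_in_S_F_iff)
qed

lemma S_F_subset_cosets:
  assumes "A \<in> S_F v a"
  shows "\<exists>(i, t)\<in>coset_index. A \<in> SL2_int_coset v (coset_rep i t)"
proof -
  obtain k i x where k: "k \<in> SL2_int v" and i: "i \<le> m" and x: "vge v 0 x"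
    and kA: "k ** A = mat2 (\<pi> ^ i / a) x 0 (a / \<pi> ^ i)"
    using S_F_triangularize[OF assms] .
  obtain t where t: "t \<in> digit_expansions \<pi> R (m - i)" "vge v (int (m - i)) (x - t)"
    using digit_expansions_approx x by (auto simp: int_ring_def)
  define s where "s = (\<pi> ^ i / a) * (x - t)"
  have "vge v 0 s"
    unfolding s_def using t(2) i vge_mult_nonzero[of "\<pi> ^ i / a" 0 "x - t"]
    by (simp add: valuation_divide valuation_a)
  then have u: "mat2 1 (- s) 0 1 \<in> SL2_int v"
    by (simp add: SL2_int_iff det_mat2 integral_mat2_iff)
  have "(mat2 1 (- s) 0 1 ** k) ** A = coset_rep i t"
    by (simp add: kA coset_rep_def s_def mat2_mult field_simps flip: matrix_mul_assoc)
  then have "A \<in> SL2_int_coset v (coset_rep i t)"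
    by (rule SL2_int_coset_memI[OF SL2_int_mult[OF u k]])
  moreover have "(i, t) \<in> coset_index"
    using i t by (simp add: coset_index_def)
  ultimately show ?thesis
    by blast
qed

lemma coset_rep_unique:
  assumes "(i, x) \<in> coset_index" and "(i', x') \<in> coset_index"
    and "coset_rep i' x' ** adjugate2 (coset_rep i x) \<in> SL2_int v"
  shows "i = i'" and "x = x'"
proof -
  have "coset_rep i' x' ** adjugate2 (coset_rep i x)
      = mat2 (\<pi> ^ i' / \<pi> ^ i) ((\<pi> ^ i / a) * x' - (\<pi> ^ i' / a) * x) 0 (\<pi> ^ i / \<pi> ^ i')"
    by (simp add: coset_rep_def mat2_mult field_simps)
  then have entries: "vge v 0 (\<pi> ^ i' / \<pi> ^ i)" "vge v 0 (\<pi> ^ i / \<pi> ^ i')"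
    "vge v 0 ((\<pi> ^ i / a) * x' - (\<pi> ^ i' / a) * x)"
    using assms(3) by (simp_all add: SL2_int_iff integral_mat2_iff)
  then show "i = i'"
    by (simp add: valuation_divide)
  then have "vge v 0 ((\<pi> ^ i / a) * (x' - x))"
    using entries(3) by (simp add: right_diff_distrib)
  then have "vge v (int (m - i)) (x' - x)"
    using assms(1) vge_mult_nonzero[of "\<pi> ^ i / a" 0 "x' - x"]
    by (simp add: valuation_divide valuation_a coset_index_def)
  then show "x = x'"
    using assms(1,2) \<open>i = i'\<close> digit_expansions_unique[of x' "m - i" x]
    by (simp add: coset_index_def of_nat_diff)
qed

lemma disjoint_cosets: "disjoint_family_on (\<lambda>p. SL2_int_coset v (case_prod coset_rep p)) coset_index"
  unfolding disjoint_family_on_def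
  using SL2_int_coset_meet[OF det_coset_rep] coset_rep_unique by fast

lemma S_F_eq_Union_cosets: "S_F v a = (\<Union>p\<in>coset_index. SL2_int_coset v (case_prod coset_rep p))"
  using S_F_subset_cosets SL2_int_coset_subset_S_F by fastforce

lemma card_coset_index: "finite coset_index" "card coset_index = (\<Sum>i\<le>m. card R ^ (m - i))"
  using card_digit_expansions by (auto simp: coset_index_def)

lemma emeasure_S_F:
  assumes "normalized_right_haar v M"
  shows "emeasure M (S_F v a) = ennreal ((1 - real (card R) ^ (m + 1)) / (1 - real (card R)))"
proof -
  have q: "real (card R) \<noteq> 1"
    using two_le_card_digits by linarith
  have "emeasure M (S_F v a) = of_nat (card coset_index)"
    unfolding S_F_eq_Union_cosets
    using emeasure_disjoint_Union_SL2_int_cosets[OF assms card_coset_index(1) _ disjoint_cosets]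
    by (simp add: det_coset_rep split_beta)
  also have "card coset_index = (\<Sum>i<Suc m. card R ^ i)"
    using sum.nat_diff_reindex[of "\<lambda>i. card R ^ i" "Suc m"]
    by (simp add: card_coset_index(2) lessThan_Suc_atMost)
  also have "(of_nat (\<Sum>i<Suc m. card R ^ i) :: ennreal) = ennreal (real (\<Sum>i<Suc m. card R ^ i))"
    by (rule ennreal_of_nat_eq_real_of_nat)
  also have "real (\<Sum>i<Suc m. card R ^ i) = (\<Sum>i<Suc m. real (card R) ^ i)"
    by (simp only: of_nat_sum of_nat_power)
  also have "\<dots> = (1 - real (card R) ^ (m + 1)) / (1 - real (card R))"
    using geometric_sum[OF q, of "Suc m"] by (metis minus_diff_eq minus_divide_divide Suc_eq_plus1)
  finally show ?thesis .
qed

end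

theorem corollary2p4:
  fixes v :: "'a::field_char_0 \<Rightarrow> int" and p :: nat and M :: "('a ^ 2 ^ 2) measure"
    and a :: 'a
  assumes "padic_local_field v p"
    and "normalized_right_haar v M"
    and "a \<in> Zp_in v p" and "a \<noteq> 0"
  shows "emeasure M (S_F v a) =
    ennreal ((1 - real (residue_card v) ^ (ram_index v p * vp v p a + 1))
             / (1 - real (residue_card v)))"
proof -
  interpret valued_field v
    using assms(1) by unfold_locales (simp add: padic_local_field_def)
  obtain \<pi> where \<pi>: "\<pi> \<noteq> 0" "v \<pi> = 1"
    using discrete_valuation by (auto simp: discrete_valuation_def)
  have fin: "finite (residue_field v)"
    using assms(1) by (simp add: padic_local_field_def)
  obtain R where R: "R \<subseteq> int_ring v" "\<And>x. x \<in> int_ring v \<Longrightarrow> \<exists>r\<in>R. vge v 1 (x - r)"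
    "\<And>r r'. r \<in> R \<Longrightarrow> r' \<in> R \<Longrightarrow> vge v 1 (r - r') \<Longrightarrow> r = r'"
    "finite R" "card R = residue_card v"
    by (rule residue_representatives_exist[OF fin]) (rule that)
  interpret coset_decomposition v \<pi> R a "ram_index v p * vp v p a"
    by unfold_locales (use \<pi> R assms(4) vp_times_ram_index[OF assms(1,3,4)] in simp_all)
  show ?thesis
    using emeasure_S_F[OF assms(2)] R(5) by simp
qed

end
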